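(* Let $X$ be a random vector in $\mathbb{R}^n$. Then $\mathbb{P}\big(X\in\mathcal{C}_n(X)\big)=1$.
   Context: For a random vector $X$ in $\mathbb{R}^n$ and an integer $m\ge0$, the $m$-dimensional mould $\mathcal{C}_m(X)$ is the set of all $x\in\mathbb{R}^n$ such that $\liminf_{\epsilon\to0^+}\mathbb{P}(\|X-x\|_2<\epsilon)/\epsilon^m>0$. (It is a Borel subset of $\mathbb{R}^n$.) *)

theory Defs
  imports "HOL-Probability.Probability"
begin

definition mould :: "'b measure \<Rightarrow> ('b \<Rightarrow> 'a::euclidean_space) \<Rightarrow> nat \<Rightarrow> 'a set" where
  "mould M X m = {x. Liminf (at_right (0::real))
      (\<lambda>e. ereal (measure M {\<omega> \<in> space M. norm (X \<omega> - x) < e} / e ^ m)) > 0}"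

end

theory Submission
  imports Defs
begin

text \<open>Let \<open>\<mu>\<close> be the law of \<open>X\<close>, a finite Borel measure on \<open>R^n\<close>. A point \<open>x\<close> outside the
  mould is the centre of arbitrarily small balls with \<open>\<mu>(B(x,e)) < c e^n\<close>, for every \<open>c > 0\<close>.
  For the points \<open>A\<close> of \<open>B(0,k)\<close> outside the mould, the Vitali covering lemma picks countably many
  such balls covering \<open>A\<close> whose shrinkings by the factor 5 are disjoint and lie in \<open>B(0,k+1)\<close>;
  comparing with Lebesgue measure gives \<open>\<mu>(A) vol B(0,1) \<le> c 5^n vol B(0,k+1)\<close>, and letting
  \<open>c \<rightarrow> 0\<close> shows that \<open>A\<close> is \<open>\<mu>\<close>-null. The mould is Borel because, the ball measure being
  monotone in the radius, its defining condition only needs to be checked at rational radii.\<close>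

lemma Liminf_ereal_pos_iff:
  "0 < Liminf F (\<lambda>x. ereal (g x)) \<longleftrightarrow> (\<exists>c>0. \<forall>\<^sub>F x in F. c \<le> g x)"
proof
  assume "0 < Liminf F (\<lambda>x. ereal (g x))"
  then obtain c where "0 < ereal c" "ereal c < Liminf F (\<lambda>x. ereal (g x))"
    using ereal_dense2 by blast
  then have "c > 0" "\<forall>\<^sub>F x in F. c < g x"
    using le_Liminf_iff[of "Liminf F (\<lambda>x. ereal (g x))" F "\<lambda>x. ereal (g x)"] by auto
  then show "\<exists>c>0. \<forall>\<^sub>F x in F. c \<le> g x"
    by (auto elim!: eventually_mono)
next
  assume "\<exists>c>0. \<forall>\<^sub>F x in F. c \<le> g x"
  then obtain c where "c > 0" "\<forall>\<^sub>F x in F. ereal c \<le> ereal (g x)"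
    by auto
  then have "ereal c \<le> Liminf F (\<lambda>x. ereal (g x))"
    by (intro Liminf_bounded)
  with \<open>c > 0\<close> show "0 < Liminf F (\<lambda>x. ereal (g x))"
    by (meson ereal_less(2) less_le_trans)
qed

definition measure_mould :: "'a::metric_space measure \<Rightarrow> nat \<Rightarrow> 'a set" where
  "measure_mould \<mu> m = {x. \<exists>c>0. \<forall>\<^sub>F e in at_right 0. c * e ^ m \<le> measure \<mu> (ball x e)}"

lemma mould_eq_measure_mould:
  assumes "X \<in> borel_measurable M"
  shows "mould M X m = measure_mould (distr M borel X) m"
proof -
  have law: "measure M {\<omega> \<in> space M. norm (X \<omega> - x) < e} = measure (distr M borel X) (ball x e)"
    for x e
  proof -
    have "{\<omega> \<in> space M. norm (X \<omega> - x) < e} = X -` ball x e \<inter> space M"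
      by (auto simp: dist_norm norm_minus_commute)
    then show ?thesis
      using measure_distr[OF assms, of "ball x e"] by simp
  qed
  have "(\<forall>\<^sub>F e in at_right 0. c \<le> f e / e ^ m) \<longleftrightarrow> (\<forall>\<^sub>F e in at_right 0. c * e ^ m \<le> f e)"
    for c and f :: "real \<Rightarrow> real"
    by (rule eventually_cong[OF eventually_at_right_less]) (simp add: pos_le_divide_eq)
  then show ?thesis
    unfolding mould_def measure_mould_def law Liminf_ereal_pos_iff by simp
qed

lemma borel_measurable_measure_ball:
  fixes \<mu> :: "'a::{metric_space, second_countable_topology} measure"
  assumes "sigma_finite_measure \<mu>" and sets_\<mu>: "sets \<mu> = sets borel"
  shows "(\<lambda>x. measure \<mu> (ball x r)) \<in> borel_measurable borel"
proof -
  interpret sigma_finite_measure \<mu> by fact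
  have "open {p::'a \<times> 'a. dist (fst p) (snd p) < r}"
    by (intro open_Collect_less continuous_intros)
  then have "{p::'a \<times> 'a. dist (fst p) (snd p) < r} \<in> sets (borel \<Otimes>\<^sub>M \<mu>)"
    unfolding sets_pair_measure_cong[OF refl sets_\<mu>] borel_prod by simp
  then have "(\<lambda>x. emeasure \<mu> (Pair x -` {p::'a \<times> 'a. dist (fst p) (snd p) < r}))
      \<in> borel_measurable borel"
    by (rule measurable_emeasure_Pair)
  moreover have "Pair x -` {p::'a \<times> 'a. dist (fst p) (snd p) < r} = ball x r" for x
    by (auto simp: ball_def)
  ultimately show ?thesis
    unfolding measure_def by simp
qed

lemma measure_mould_eq_rational:
  assumes "finite_measure \<mu>" and sets_\<mu>: "sets \<mu> = sets borel"
  shows "measure_mould \<mu> m = (\<Union>c\<in>\<rat> \<inter> {0<..}. \<Union>j::nat. \<Inter>r\<in>\<rat> \<inter> {0<..<inverse (Suc j)}.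
           {x. c * r ^ m \<le> measure \<mu> (ball x r)})"
    (is "_ = ?R")
proof
  show "measure_mould \<mu> m \<subseteq> ?R"
  proof
    fix x assume "x \<in> measure_mould \<mu> m"
    then obtain d b where "d > 0" "b > 0"
      and d: "\<And>e. 0 < e \<Longrightarrow> e < b \<Longrightarrow> d * e ^ m \<le> measure \<mu> (ball x e)"
      by (auto simp: measure_mould_def eventually_at_right_field)
    obtain c where c: "c \<in> \<rat>" "0 < c" "c < d"
      using Rats_dense_in_real[OF \<open>d > 0\<close>] by auto
    obtain j :: nat where j: "inverse (Suc j) < b"
      using reals_Archimedean[OF \<open>b > 0\<close>] by auto
    have "c * r ^ m \<le> measure \<mu> (ball x r)" if "0 < r" "r < inverse (Suc j)" for r
    proof -
      have "c * r ^ m \<le> d * r ^ m"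
        using c that by (intro mult_right_mono) auto
      also have "\<dots> \<le> measure \<mu> (ball x r)"
        using that j by (intro d) auto
      finally show ?thesis .
    qed
    then have "x \<in> (\<Inter>r\<in>\<rat> \<inter> {0<..<inverse (Suc j)}. {x. c * r ^ m \<le> measure \<mu> (ball x r)})"
      by simp
    with c show "x \<in> ?R"
      by (intro UN_I[of c] UN_I[of j]) auto
  qed
next
  show "?R \<subseteq> measure_mould \<mu> m"
  proof
    fix x assume "x \<in> ?R"
    then obtain c j where c: "c \<in> \<rat> \<inter> {0<..}"
      and "x \<in> (\<Inter>r\<in>\<rat> \<inter> {0<..<inverse (Suc j)}. {x. c * r ^ m \<le> measure \<mu> (ball x r)})"
      by (elim UN_E)
    then have H: "\<And>r. r \<in> \<rat> \<Longrightarrow> 0 < r \<Longrightarrow> r < inverse (Suc j) \<Longrightarrow> c * r ^ m \<le> measure \<mu> (ball x r)"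
      by simp
    have "c / 2 ^ m * e ^ m \<le> measure \<mu> (ball x e)" if e: "0 < e" "e < inverse (Suc j)" for e
    proof -
      obtain r where r: "r \<in> \<rat>" "e / 2 < r" "r < e"
        using Rats_dense_in_real[of "e / 2" e] e by auto
      have "c / 2 ^ m * e ^ m = c * (e / 2) ^ m"
        by (simp add: power_divide)
      also have "\<dots> \<le> c * r ^ m"
        using r e c by (intro mult_left_mono power_mono) auto
      also have "\<dots> \<le> measure \<mu> (ball x r)"
        using H r e by simp
      also have "\<dots> \<le> measure \<mu> (ball x e)"
        using r by (intro finite_measure.finite_measure_mono[OF assms(1)]) (auto simp: sets_\<mu>)
      finally show ?thesis .
    qed
    then have "\<forall>\<^sub>F e in at_right 0. c / 2 ^ m * e ^ m \<le> measure \<mu> (ball x e)"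
      unfolding eventually_at_right_field by (intro exI[of _ "inverse (Suc j)"]) auto
    with c show "x \<in> measure_mould \<mu> m"
      unfolding measure_mould_def by (intro CollectI exI[of _ "c / 2 ^ m"]) auto
  qed
qed

lemma sets_measure_mould:
  fixes \<mu> :: "'a::{metric_space, second_countable_topology} measure"
  assumes "finite_measure \<mu>" and "sets \<mu> = sets borel"
  shows "measure_mould \<mu> m \<in> sets borel"
proof -
  have "(\<lambda>x. measure \<mu> (ball x r)) \<in> borel_measurable borel" for r
    using assms finite_measure.sigma_finite_measure[OF assms(1)]
    by (intro borel_measurable_measure_ball) auto
  then have level: "{x. c * r ^ m \<le> measure \<mu> (ball x r)} \<in> sets borel" for c r
    using borel_measurable_le[where f = "\<lambda>_. c * r ^ m" and M = borel] by simp
  show ?thesis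
    unfolding measure_mould_eq_rational[OF assms]
    by (intro sets.countable_UN'' sets.countable_INT'' countable_Int1 countable_rat countableI_type
        level) simp
qed

lemma emeasure_UN_countable_le:
  assumes sets: "\<And>i. i \<in> I \<Longrightarrow> X i \<in> sets M" and I: "countable I"
  shows "emeasure M (\<Union>(X ` I)) \<le> (\<integral>\<^sup>+i. emeasure M (X i) \<partial>count_space I)"
proof -
  have indicator_le: "indicator (\<Union>(X ` I)) x \<le> (\<integral>\<^sup>+ i. indicator (X i) x \<partial>count_space I)" for x
  proof (cases "x \<in> \<Union>(X ` I)")
    case True
    then obtain j where j: "x \<in> X j" "j \<in> I" by auto
    have "(1::ennreal) = (\<integral>\<^sup>+ i. indicator {j} i \<partial>count_space I)"
      using j by (subst nn_integral_indicator) auto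
    also have "\<dots> \<le> (\<integral>\<^sup>+ i. indicator (X i) x \<partial>count_space I)"
      using j by (intro nn_integral_mono) (auto split: split_indicator)
    finally show ?thesis using True by simp
  qed simp
  have "\<Union>(X ` I) \<in> sets M"
    using sets I by (intro sets.countable_UN') auto
  then have "emeasure M (\<Union>(X ` I)) = (\<integral>\<^sup>+x. indicator (\<Union>(X ` I)) x \<partial>M)"
    by simp
  also have "\<dots> \<le> (\<integral>\<^sup>+x. \<integral>\<^sup>+ i. indicator (X i) x \<partial>count_space I \<partial>M)"
    by (intro nn_integral_mono indicator_le)
  also have "\<dots> = (\<integral>\<^sup>+i. \<integral>\<^sup>+x. indicator (X i) x \<partial>M \<partial>count_space I)"
    using sets I by (intro nn_integral_count_space_nn_integral) auto
  also have "\<dots> = (\<integral>\<^sup>+i. emeasure M (X i) \<partial>count_space I)"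
    using sets by (intro nn_integral_cong) auto
  finally show ?thesis .
qed

lemma nn_integral_volume_disjoint_balls_le:
  fixes a :: "'i \<Rightarrow> 'a::euclidean_space" and r :: "'i \<Rightarrow> real"
  assumes C: "countable C" and r: "\<And>i. i \<in> C \<Longrightarrow> 0 \<le> r i"
    and disj: "pairwise (\<lambda>i j. disjnt (ball (a i) (r i)) (ball (a j) (r j))) C"
    and S: "S \<in> sets lebesgue" "(\<Union>i\<in>C. ball (a i) (r i)) \<subseteq> S"
  shows "(\<integral>\<^sup>+i. ennreal (r i ^ DIM('a)) \<partial>count_space C) * emeasure lebesgue (ball (0::'a) 1)
           \<le> emeasure lebesgue S"
proof -
  have "(\<integral>\<^sup>+i. ennreal (r i ^ DIM('a)) \<partial>count_space C) * emeasure lebesgue (ball (0::'a) 1)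
      = (\<integral>\<^sup>+i. ennreal (r i ^ DIM('a)) * emeasure lebesgue (ball (0::'a) 1) \<partial>count_space C)"
    by (rule nn_integral_multc[symmetric]) simp
  also have "\<dots> = (\<integral>\<^sup>+i. emeasure lebesgue (ball (a i) (r i)) \<partial>count_space C)"
    by (intro nn_integral_cong emeasure_lebesgue_ball_conv_unit_ball[symmetric]) (use r in auto)
  also have "\<dots> = emeasure lebesgue (\<Union>i\<in>C. ball (a i) (r i))"
    using C disj
    by (intro emeasure_UN_countable[symmetric])
       (auto simp: disjoint_family_on_def pairwise_def disjnt_def)
  also have "\<dots> \<le> emeasure lebesgue S"
    using S by (intro emeasure_mono) auto
  finally show ?thesis .
qed

lemma Vitali_small_balls_bound:
  fixes \<mu> :: "'a::euclidean_space measure"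
  assumes sets_\<mu>: "sets \<mu> = sets borel" and fin: "finite_measure \<mu>"
    and A: "A \<subseteq> ball 0 k" and c: "c > 0"
    and small: "\<And>x. x \<in> A \<Longrightarrow> \<exists>\<^sub>F e in at_right 0. measure \<mu> (ball x e) < c * e ^ DIM('a)"
  shows "emeasure \<mu> A * emeasure lebesgue (ball (0::'a) 1)
           \<le> ennreal (c * 5 ^ DIM('a)) * emeasure lebesgue (ball (0::'a) (k + 1))"
proof -
  define K where "K = {(x, e). x \<in> A \<and> 0 < e \<and> e < 1 \<and> measure \<mu> (ball x e) < c * e ^ DIM('a)}"
  have cover_K: "A \<subseteq> (\<Union>p\<in>K. ball (fst p) (snd p / 5))"
  proof
    fix x assume x: "x \<in> A"
    have "\<forall>\<^sub>F e in at_right (0::real). 0 < e \<and> e < 1"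
      by (simp add: eventually_at_right_field) (use zero_less_one in blast)
    then obtain e where "0 < e" "e < 1" "measure \<mu> (ball x e) < c * e ^ DIM('a)"
      using frequently_ex[OF frequently_eventually_conj[OF small[OF x]]] by blast
    then show "x \<in> (\<Union>p\<in>K. ball (fst p) (snd p / 5))"
      using x by (intro UN_I[of "(x, e)"]) (auto simp: K_def)
  qed
  have radius_K: "\<And>p. p \<in> K \<Longrightarrow> 0 < snd p / 5 \<and> snd p / 5 \<le> 1"
    by (auto simp: K_def)
  obtain C where C: "countable C" "C \<subseteq> K"
    and disj: "pairwise (\<lambda>i j. disjnt (ball (fst i) (snd i / 5)) (ball (fst j) (snd j / 5))) C"
    and cover: "A \<subseteq> (\<Union>p\<in>C. ball (fst p) (5 * (snd p / 5)))"
    using Vitali_covering_lemma_balls[OF cover_K radius_K] by blast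
  have "emeasure \<mu> A \<le> emeasure \<mu> (\<Union>p\<in>C. ball (fst p) (snd p))"
    using cover C(1) by (intro emeasure_mono) (auto simp: sets_\<mu> intro!: sets.countable_UN')
  also have "\<dots> \<le> (\<integral>\<^sup>+p. emeasure \<mu> (ball (fst p) (snd p)) \<partial>count_space C)"
    using C(1) by (intro emeasure_UN_countable_le) (auto simp: sets_\<mu>)
  also have "\<dots> \<le> (\<integral>\<^sup>+p. ennreal (c * 5 ^ DIM('a)) * ennreal ((snd p / 5) ^ DIM('a)) \<partial>count_space C)"
    using C(2) c finite_measure.emeasure_eq_measure[OF fin]
    by (intro nn_integral_mono)
       (auto simp: K_def ennreal_mult'[symmetric] power_divide intro!: ennreal_leI)
  also have "\<dots> = ennreal (c * 5 ^ DIM('a)) * (\<integral>\<^sup>+p. ennreal ((snd p / 5) ^ DIM('a)) \<partial>count_space C)"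
    by (rule nn_integral_cmult) simp
  finally have "emeasure \<mu> A * emeasure lebesgue (ball (0::'a) 1) \<le> ennreal (c * 5 ^ DIM('a)) *
      ((\<integral>\<^sup>+p. ennreal ((snd p / 5) ^ DIM('a)) \<partial>count_space C) * emeasure lebesgue (ball (0::'a) 1))"
    by (metis mult.assoc mult_right_mono zero_le)
  also have "\<dots> \<le> ennreal (c * 5 ^ DIM('a)) * emeasure lebesgue (ball (0::'a) (k + 1))"
  proof -
    have "(\<Union>p\<in>C. ball (fst p) (snd p / 5)) \<subseteq> ball 0 (k + 1)"
    proof
      fix y assume "y \<in> (\<Union>p\<in>C. ball (fst p) (snd p / 5))"
      then obtain p where p: "p \<in> C" "dist (fst p) y < snd p / 5" by auto
      then have "p \<in> K" using C(2) by auto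
      then have "dist 0 (fst p) < k" "snd p < 1" using A by (auto simp: K_def)
      then show "y \<in> ball 0 (k + 1)"
        using p dist_triangle[of 0 y "fst p"] by (simp add: dist_commute)
    qed
    then have "(\<integral>\<^sup>+p. ennreal ((snd p / 5) ^ DIM('a)) \<partial>count_space C) * emeasure lebesgue (ball (0::'a) 1)
        \<le> emeasure lebesgue (ball (0::'a) (k + 1))"
      using C disj by (intro nn_integral_volume_disjoint_balls_le) (auto simp: K_def)
    then show ?thesis by (rule mult_left_mono) simp
  qed
  finally show ?thesis .
qed

lemma null_sets_small_ball_measures:
  fixes \<mu> :: "'a::euclidean_space measure"
  assumes sets_\<mu>: "sets \<mu> = sets borel" and fin: "finite_measure \<mu>" and A: "A \<in> sets borel"
    and small: "\<And>x c. x \<in> A \<Longrightarrow> c > 0 \<Longrightarrow>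
      \<exists>\<^sub>F e in at_right 0. measure \<mu> (ball x e) < c * e ^ DIM('a)"
  shows "A \<in> null_sets \<mu>"
proof -
  have "A \<inter> ball 0 (real k) \<in> null_sets \<mu>" for k :: nat
  proof -
    define a where "a = measure \<mu> (A \<inter> ball 0 (real k))"
    define K where "K = 5 ^ DIM('a) * measure lborel (ball (0::'a) (real k + 1))"
    have lebesgue_ball: "emeasure lebesgue (ball (0::'a) r) = ennreal (measure lborel (ball (0::'a) r))" for r
      using emeasure_lborel_ball_finite[of "0::'a" r] by (subst emeasure_eq_ennreal_measure) auto
    have "a * measure lborel (ball (0::'a) 1) \<le> c * K" if "c > 0" for c
    proof -
      have "emeasure \<mu> (A \<inter> ball 0 (real k)) * emeasure lebesgue (ball (0::'a) 1)
          \<le> ennreal (c * 5 ^ DIM('a)) * emeasure lebesgue (ball (0::'a) (real k + 1))"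
        using small that by (intro Vitali_small_balls_bound[OF sets_\<mu> fin]) auto
      then show ?thesis
        using that finite_measure.emeasure_eq_measure[OF fin]
        by (simp add: lebesgue_ball a_def K_def ennreal_mult'[symmetric] mult.assoc)
    qed
    then have "\<forall>\<^sub>F c in at_right 0. a * measure lborel (ball (0::'a) 1) \<le> c * K"
      by (simp add: eventually_at_right_field) (use zero_less_one in blast)
    moreover have "((\<lambda>c. c * K) \<longlongrightarrow> 0 * K) (at_right 0)"
      by (intro tendsto_intros)
    ultimately have "a * measure lborel (ball (0::'a) 1) \<le> 0"
      using tendsto_lowerbound by fastforce
    then have "a = 0"
      using content_ball_pos[of 1 "0::'a"] measure_nonneg[of \<mu> "A \<inter> ball 0 (real k)"]
      unfolding a_def by (smt (verit) mult_pos_pos)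
    then show ?thesis
      using A finite_measure.emeasure_eq_measure[OF fin]
      by (auto simp: null_sets_def a_def sets_\<mu>)
  qed
  then have "(\<Union>k. A \<inter> ball 0 (real k)) \<in> null_sets \<mu>"
    by (rule null_sets_UN)
  also have "(\<Union>k. A \<inter> ball 0 (real k)) = A"
    using reals_Archimedean2 by (auto simp: dist_norm)
  finally show ?thesis .
qed

lemma AE_measure_mould:
  fixes \<mu> :: "'a::euclidean_space measure"
  assumes "finite_measure \<mu>" and "sets \<mu> = sets borel"
  shows "AE x in \<mu>. x \<in> measure_mould \<mu> DIM('a)"
proof -
  have "- measure_mould \<mu> DIM('a) \<in> null_sets \<mu>"
  proof (rule null_sets_small_ball_measures[OF assms(2,1)])
    show "- measure_mould \<mu> DIM('a) \<in> sets borel"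
      using sets_measure_mould[OF assms] by auto
  next
    fix x and c :: real
    assume "x \<in> - measure_mould \<mu> DIM('a)" "c > 0"
    then show "\<exists>\<^sub>F e in at_right 0. measure \<mu> (ball x e) < c * e ^ DIM('a)"
      by (auto simp: measure_mould_def not_eventually not_le)
  qed
  then show ?thesis
    by (rule AE_I') auto
qed

theorem mainTheorem5:
  fixes M :: "'b measure" and X :: "'b \<Rightarrow> 'a::euclidean_space"
  assumes "prob_space M"
    and "X \<in> borel_measurable M"
  shows "measure M {\<omega> \<in> space M. X \<omega> \<in> mould M X DIM('a)} = 1"
proof -
  interpret prob_space M by fact
  interpret law: prob_space "distr M borel X"
    by (rule prob_space_distr[OF assms(2)])
  let ?S = "measure_mould (distr M borel X) DIM('a)"
  have fin_law: "finite_measure (distr M borel X)"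
    by (rule law.finite_measure_axioms)
  have sets_law: "sets (distr M borel X) = sets borel"
    by simp
  have S: "?S \<in> sets borel"
    by (rule sets_measure_mould[OF fin_law sets_law])
  have "AE x in distr M borel X. x \<in> ?S"
    by (rule AE_measure_mould[OF fin_law sets_law])
  then have "AE \<omega> in M. X \<omega> \<in> ?S"
    using S by (subst (asm) AE_distr_iff[OF assms(2)]) auto
  moreover have "{\<omega> \<in> space M. X \<omega> \<in> ?S} \<in> events"
    using measurable_sets[OF assms(2) S] by (simp add: vimage_def Int_def conj_commute)
  ultimately show ?thesis
    by (simp add: prob_Collect_eq_1 mould_eq_measure_mould[OF assms(2)])
qed

end
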